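(* Let $L>0$, $\rho\in C([0,L];[0,\infty))$ with $\rho(0)=0$, $\rho>0$ on $(0,L]$ and $V(0,0):=\int_0^L\rho(\zeta)/\zeta\,d\zeta<\infty$; let $V(r,z)=\int_0^L\rho(\zeta)((\zeta-z)^2+r^2)^{-1/2}d\zeta$. Let $\alpha>0$. (a) Suppose $\rho$ is monotonically increasing on some interval $[0,b]$, $b>0$, and let $\delta\in(0,1)$. Then $\lim_{z\to0+}\rho(z)\log z=0$ and $$\limsup_{z\to0+}V\Big(\exp\Big(-\tfrac{\alpha}{\rho((1+\delta)z)}\Big),z\Big)\le V(0,0)+2\alpha\le\liminf_{z\to0+}V\Big(\exp\Big(-\tfrac{\alpha}{\rho((1-\delta)z)}\Big),z\Big).$$ (b) Suppose $\rho$ is Dini continuous on some interval $[0,b]$, $b\in(0,L]$. Then $\lim_{z\to0+}\rho(z)\log z=0$ and $$\lim_{z\to0+}V(e^{-\alpha/\rho(z)},z)=V(0,0)+2\alpha.$$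
   Context: For continuous $f:[a,b]\to\mathbb{R}$, the modulus of continuity is $\omega_f(t)=\sup\{|f(x)-f(y)|:x,y\in[a,b],|x-y|\le t\}$, and $f$ is Dini continuous if $\int_0^1\omega_f(t)/t\,dt<\infty$. *)

theory Defs
  imports "HOL-Analysis.Analysis" "HOL-Library.Liminf_Limsup"
begin

text \<open>The potential V(r,z) = int_0^L rho(zeta) ((zeta - z)^2 + r^2)^(-1/2) d zeta.
  Note V 0 0 = int_0^L rho(zeta)/zeta d zeta (since sqrt(zeta^2) = zeta on [0,L]).\<close>
definition pot :: "(real \<Rightarrow> real) \<Rightarrow> real \<Rightarrow> real \<Rightarrow> real \<Rightarrow> real" where
  "pot \<rho> L r z = integral {0..L} (\<lambda>\<zeta>. \<rho> \<zeta> / sqrt ((\<zeta> - z)\<^sup>2 + r\<^sup>2))"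

definition modulus_cont :: "(real \<Rightarrow> real) \<Rightarrow> real \<Rightarrow> real \<Rightarrow> real \<Rightarrow> real" where
  "modulus_cont f a b t =
     Sup {\<bar>f x - f y\<bar> | x y. x \<in> {a..b} \<and> y \<in> {a..b} \<and> \<bar>x - y\<bar> \<le> t}"

definition dini_continuous_on :: "(real \<Rightarrow> real) \<Rightarrow> real \<Rightarrow> real \<Rightarrow> bool" where
  "dini_continuous_on f a b \<longleftrightarrow>
     continuous_on {a..b} f \<and>
     (\<lambda>t. modulus_cont f a b t / t) integrable_on {0..1}"

end

theory Submission
  imports Defs
begin

(*
  Split V(r, z) at a multiple c z of the height.  On the far part [c z, L], c > 1, the integrand
  is dominated by c/(c - 1) * rho(zeta)/zeta, so by dominated convergence it tends to V(0, 0)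
  as z, r -> 0.  On the near part the kernel integrates explicitly,
    int_{z-a}^{z+b} ((zeta - z)^2 + r^2)^(-1/2) d zeta = arsinh (a/r) + arsinh (b/r),
  and for r = exp (-alpha/p) with p -> 0 and p ln z -> 0 one has p * arsinh (kappa z / r) -> alpha:
  the contribution 2 alpha comes entirely from -p ln r = alpha.  In case (a) monotonicity
  brackets rho on the near part between rho((1 - delta) z) and rho((1 + delta) z); in case (b)
  replacing rho by rho(z) on [0, 2z] costs at most 2 int_0^z omega(t)/t dt.  In both cases
  rho(z) ln z -> 0, since g(z) ln (1/z) <= 2 int_0^sqrt(z) g(t)/t dt for the monotone
  majorant g = rho resp. g = omega.
*)

section \<open>The kernel integral\<close>

lemma arsinh_div_eq_ln:
  fixes y r :: real
  assumes "r > 0"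
  shows "arsinh (y / r) = ln (y + sqrt (y\<^sup>2 + r\<^sup>2)) - ln r"
proof -
  have sqrt_gt: "sqrt (y\<^sup>2 + r\<^sup>2) > \<bar>y\<bar>"
    using assms by (intro real_less_rsqrt) (simp add: power2_abs)
  have "sqrt ((y / r)\<^sup>2 + 1) = sqrt (y\<^sup>2 + r\<^sup>2) / r"
    using assms by (simp add: power_divide field_simps real_sqrt_divide)
  then have "y / r + sqrt ((y / r)\<^sup>2 + 1) = (y + sqrt (y\<^sup>2 + r\<^sup>2)) / r"
    by (simp add: add_divide_distrib)
  moreover have "y + sqrt (y\<^sup>2 + r\<^sup>2) > 0" using sqrt_gt by linarith
  ultimately show ?thesis using assms by (simp add: arsinh_real_def ln_div)
qed

lemma kernel_has_integral:
  fixes r z a b :: real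
  assumes "r > 0" and "- a \<le> b"
  shows "((\<lambda>\<zeta>. 1 / sqrt ((\<zeta> - z)\<^sup>2 + r\<^sup>2)) has_integral arsinh (a / r) + arsinh (b / r))
           {z - a..z + b}"
proof -
  have deriv: "((\<lambda>\<zeta>. arsinh ((\<zeta> - z) / r)) has_real_derivative 1 / sqrt ((\<zeta> - z)\<^sup>2 + r\<^sup>2))
      (at \<zeta> within {z - a..z + b})" for \<zeta>
  proof -
    have "((\<lambda>\<zeta>. arsinh ((\<zeta> - z) / r)) has_real_derivative
        1 / sqrt (((\<zeta> - z) / r)\<^sup>2 + 1) * (1 / r)) (at \<zeta> within {z - a..z + b})"
      by (rule DERIV_chain2[OF arsinh_real_has_field_derivative])
         (use assms in \<open>auto intro!: derivative_eq_intros\<close>)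
    moreover have "sqrt (((\<zeta> - z) / r)\<^sup>2 + 1) * r = sqrt ((\<zeta> - z)\<^sup>2 + r\<^sup>2)"
      using assms by (simp add: power_divide field_simps real_sqrt_divide)
    ultimately show ?thesis by (simp add: divide_divide_eq_left')
  qed
  have "((\<lambda>\<zeta>. 1 / sqrt ((\<zeta> - z)\<^sup>2 + r\<^sup>2)) has_integral
          arsinh (((z + b) - z) / r) - arsinh (((z - a) - z) / r)) {z - a..z + b}"
    using assms deriv
    by (intro fundamental_theorem_of_calculus)
       (auto simp: has_real_derivative_iff_has_vector_derivative[symmetric])
  then show ?thesis by (simp add: add.commute)
qed

lemma eventually_at_right_0_below:
  "e > 0 \<Longrightarrow> \<forall>\<^sub>F z in at_right (0::real). 0 < z \<and> z < e"
  unfolding eventually_at_right_field by (intro exI[of _ e]) simp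

lemma filterlim_scale_at_right_0:
  fixes \<kappa> :: real
  assumes "\<kappa> > 0"
  shows "filterlim (\<lambda>z. \<kappa> * z) (at_right 0) (at_right 0)"
proof (rule tendsto_imp_filterlim_at_right)
  have "((\<lambda>z. \<kappa> * z) \<longlongrightarrow> \<kappa> * 0) (at_right 0)"
    by (intro tendsto_intros)
  then show "((\<lambda>z. \<kappa> * z) \<longlongrightarrow> 0) (at_right 0)" by simp
  show "\<forall>\<^sub>F z in at_right 0. 0 < \<kappa> * z"
    using eventually_at_right_less[of 0] by eventually_elim (use assms in simp)
qed

lemma filterlim_sqrt_at_right_0: "filterlim sqrt (at_right 0) (at_right 0)"
proof (rule tendsto_imp_filterlim_at_right)
  show "(sqrt \<longlongrightarrow> 0) (at_right 0)"
    using tendsto_real_sqrt[OF tendsto_ident_at[of 0 "{0<..}"]] by simp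
  show "\<forall>\<^sub>F x in at_right 0. 0 < sqrt x"
    using eventually_at_right_less[of 0] by eventually_elim simp
qed

lemma tendsto_exp_neg_div_0:
  fixes g :: "'a \<Rightarrow> real"
  assumes "(g \<longlongrightarrow> 0) F" and "\<forall>\<^sub>F x in F. g x > 0" and "\<alpha> > 0"
  shows "((\<lambda>x. exp (- \<alpha> / g x)) \<longlongrightarrow> 0) F"
proof -
  have "filterlim g (at_right 0) F"
    using assms by (intro tendsto_imp_filterlim_at_right)
  then have "filterlim (\<lambda>x. \<alpha> * inverse (g x)) at_top F"
    by (rule filterlim_tendsto_pos_mult_at_top[OF tendsto_const \<open>\<alpha> > 0\<close>
          filterlim_compose[OF filterlim_inverse_at_top_right]])
  then have "filterlim (\<lambda>x. - \<alpha> / g x) at_bot F"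
    by (simp add: filterlim_uminus_at_bot divide_inverse)
  then show ?thesis by (rule filterlim_compose[OF exp_at_bot])
qed

lemma tendsto_integral_at_right_0:
  fixes f :: "real \<Rightarrow> real"
  assumes "f integrable_on {0..b}" and "b > 0"
  shows "((\<lambda>x. integral {0..x} f) \<longlongrightarrow> 0) (at_right 0)"
proof -
  have "continuous_on {0..b} (\<lambda>x. integral {0..x} f)"
    by (rule indefinite_integral_continuous_1[OF assms(1)])
  from continuous_on_Icc_at_rightD[OF this assms(2)] show ?thesis by simp
qed

lemma tendsto_scaled_mult_ln:
  fixes f :: "real \<Rightarrow> real"
  assumes f: "(f \<longlongrightarrow> 0) (at_right 0)" and f_ln: "((\<lambda>z. f z * ln z) \<longlongrightarrow> 0) (at_right 0)"
    and "\<kappa> > 0"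
  shows "((\<lambda>z. f (\<kappa> * z) * ln z) \<longlongrightarrow> 0) (at_right 0)"
proof -
  note scale = filterlim_scale_at_right_0[OF \<open>\<kappa> > 0\<close>]
  have "((\<lambda>z. f (\<kappa> * z) * ln (\<kappa> * z) - f (\<kappa> * z) * ln \<kappa>) \<longlongrightarrow> 0 - 0 * ln \<kappa>) (at_right 0)"
    by (intro tendsto_intros filterlim_compose[OF f_ln scale] filterlim_compose[OF f scale])
  moreover have "\<forall>\<^sub>F z in at_right 0. f (\<kappa> * z) * ln (\<kappa> * z) - f (\<kappa> * z) * ln \<kappa> = f (\<kappa> * z) * ln z"
    using eventually_at_right_less[of 0]
    by eventually_elim (use \<open>\<kappa> > 0\<close> in \<open>simp add: ln_mult algebra_simps\<close>)
  ultimately show ?thesis by (simp add: tendsto_cong)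
qed

lemma tendsto_mult_ln_between:
  fixes p x :: "real \<Rightarrow> real"
  assumes p: "(p \<longlongrightarrow> 0) (at_right 0)" and p_ln: "((\<lambda>z. p z * ln z) \<longlongrightarrow> 0) (at_right 0)"
    and "\<kappa> > 0" and "C > 0"
    and between: "\<forall>\<^sub>F z in at_right 0. \<kappa> * z \<le> x z \<and> x z \<le> C"
  shows "((\<lambda>z. p z * ln (x z)) \<longlongrightarrow> 0) (at_right 0)"
proof (rule Lim_null_comparison)
  show "\<forall>\<^sub>F z in at_right 0. norm (p z * ln (x z)) \<le> \<bar>p z\<bar> * (\<bar>ln \<kappa>\<bar> + \<bar>ln C\<bar>) + \<bar>p z * ln z\<bar>"
    using between eventually_at_right_less[of 0]
  proof eventually_elim
    case (elim z)
    moreover have "\<kappa> * z > 0" using \<open>\<kappa> > 0\<close> elim by simp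
    ultimately have "ln (\<kappa> * z) \<le> ln (x z)" "ln (x z) \<le> ln C"
      by (auto intro!: ln_mono)
    then have "ln \<kappa> + ln z \<le> ln (x z)" "ln (x z) \<le> ln C"
      using \<open>\<kappa> > 0\<close> elim by (simp_all add: ln_mult)
    then have "\<bar>ln (x z)\<bar> \<le> (\<bar>ln \<kappa>\<bar> + \<bar>ln C\<bar>) + \<bar>ln z\<bar>" by linarith
    then have "\<bar>p z\<bar> * \<bar>ln (x z)\<bar> \<le> \<bar>p z\<bar> * ((\<bar>ln \<kappa>\<bar> + \<bar>ln C\<bar>) + \<bar>ln z\<bar>)"
      by (rule mult_left_mono) simp
    then show ?case by (simp add: abs_mult distrib_left)
  qed
  show "((\<lambda>z. \<bar>p z\<bar> * (\<bar>ln \<kappa>\<bar> + \<bar>ln C\<bar>) + \<bar>p z * ln z\<bar>) \<longlongrightarrow> 0) (at_right 0)"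
    using tendsto_add[OF tendsto_mult_right[OF tendsto_rabs[OF p]] tendsto_rabs[OF p_ln]] by simp
qed

lemma tendsto_mult_arsinh_exp:
  fixes p :: "real \<Rightarrow> real"
  assumes p: "(p \<longlongrightarrow> 0) (at_right 0)" and p_ln: "((\<lambda>z. p z * ln z) \<longlongrightarrow> 0) (at_right 0)"
    and p_pos: "\<forall>\<^sub>F z in at_right 0. p z > 0" and "\<kappa> > 0" and "\<alpha> \<ge> 0"
  shows "((\<lambda>z. p z * arsinh (\<kappa> * z / exp (- \<alpha> / p z))) \<longlongrightarrow> \<alpha>) (at_right 0)"
proof -
  define r where "r z = exp (- \<alpha> / p z)" for z
  define x where "x z = \<kappa> * z + sqrt ((\<kappa> * z)\<^sup>2 + (r z)\<^sup>2)" for z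
  have "\<forall>\<^sub>F z in at_right 0. \<kappa> * z \<le> x z \<and> x z \<le> 2 * \<kappa> + 1"
    using eventually_at_right_0_below[OF zero_less_one] p_pos
  proof eventually_elim
    case (elim z)
    have "r z \<le> 1" unfolding r_def using elim \<open>\<alpha> \<ge> 0\<close> by simp
    moreover have "sqrt ((\<kappa> * z)\<^sup>2 + (r z)\<^sup>2) \<le> \<kappa> * z + r z"
      using sqrt_add_le_add_sqrt[of "(\<kappa> * z)\<^sup>2" "(r z)\<^sup>2"] elim \<open>\<kappa> > 0\<close> by (simp add: r_def)
    moreover have "\<kappa> * z \<le> \<kappa>" using elim \<open>\<kappa> > 0\<close> by (simp add: mult_left_le)
    moreover have "sqrt ((\<kappa> * z)\<^sup>2 + (r z)\<^sup>2) \<ge> 0" by simp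
    ultimately show ?case unfolding x_def by linarith
  qed
  then have "((\<lambda>z. p z * ln (x z) + \<alpha>) \<longlongrightarrow> 0 + \<alpha>) (at_right 0)"
    using \<open>\<kappa> > 0\<close> by (intro tendsto_add tendsto_mult_ln_between[OF p p_ln, of \<kappa> "2 * \<kappa> + 1"]) auto
  moreover have "\<forall>\<^sub>F z in at_right 0. p z * ln (x z) + \<alpha> = p z * arsinh (\<kappa> * z / r z)"
    using p_pos by eventually_elim (simp add: x_def r_def arsinh_div_eq_ln distrib_left)
  ultimately show ?thesis unfolding r_def by (simp add: tendsto_cong)
qed

lemma Limsup_ereal_le_tendsto:
  fixes f g :: "'a \<Rightarrow> real"
  assumes "F \<noteq> bot" and "\<forall>\<^sub>F x in F. f x \<le> g x" and "(g \<longlongrightarrow> l) F"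
  shows "Limsup F (\<lambda>x. ereal (f x)) \<le> ereal l"
proof -
  have "Limsup F (\<lambda>x. ereal (f x)) \<le> Limsup F (\<lambda>x. ereal (g x))"
    using assms(2) by (intro Limsup_mono) (auto elim: eventually_mono)
  also have "\<dots> = ereal l"
    using assms(1,3) by (intro lim_imp_Limsup) (auto simp: lim_ereal)
  finally show ?thesis .
qed

lemma Liminf_ereal_ge_tendsto:
  fixes f g :: "'a \<Rightarrow> real"
  assumes "F \<noteq> bot" and "\<forall>\<^sub>F x in F. g x \<le> f x" and "(g \<longlongrightarrow> l) F"
  shows "ereal l \<le> Liminf F (\<lambda>x. ereal (f x))"
proof -
  have "ereal l = Liminf F (\<lambda>x. ereal (g x))"
    using assms(1,3) by (intro lim_imp_Liminf[symmetric]) (auto simp: lim_ereal)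
  also have "\<dots> \<le> Liminf F (\<lambda>x. ereal (f x))"
    using assms(2) by (intro Liminf_mono) (auto elim: eventually_mono)
  finally show ?thesis .
qed

section \<open>Logarithmic decay of monotone Dini-integrable functions\<close>

lemma has_integral_inverse:
  fixes a b :: real
  assumes "0 < a" and "a \<le> b"
  shows "((\<lambda>t. 1 / t) has_integral ln b - ln a) {a..b}"
  using assms
  by (intro fundamental_theorem_of_calculus)
     (auto intro!: derivative_eq_intros simp: has_real_derivative_iff_has_vector_derivative[symmetric])

lemma mono_mult_ln_le_integral:
  fixes g :: "real \<Rightarrow> real"
  assumes mono: "mono_on {0<..s} g" and nonneg: "\<forall>t\<in>{0<..s}. 0 \<le> g t"
    and int: "(\<lambda>t. g t / t) integrable_on {0..s}" and "0 < z" "z \<le> s"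
  shows "g z * (ln s - ln z) \<le> integral {0..s} (\<lambda>t. g t / t)"
proof -
  note inv = has_integral_mult_right[OF has_integral_inverse[OF \<open>0 < z\<close> \<open>z \<le> s\<close>], of "g z"]
  have "g z * (ln s - ln z) = integral {z..s} (\<lambda>t. g z * (1 / t))"
    using inv by (rule integral_unique[symmetric])
  also have "\<dots> \<le> integral {z..s} (\<lambda>t. g t / t)"
  proof (rule integral_le)
    show "(\<lambda>t. g t / t) integrable_on {z..s}"
      by (rule integrable_on_subinterval[OF int]) (use \<open>0 < z\<close> in auto)
    show "g z * (1 / t) \<le> g t / t" if "t \<in> {z..s}" for t
      using mono_onD[OF mono, of z t] that \<open>0 < z\<close> by (simp add: divide_right_mono)
  qed (use inv in blast)
  also have "\<dots> \<le> integral {0..z} (\<lambda>t. g t / t) + integral {z..s} (\<lambda>t. g t / t)"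
  proof -
    have "0 \<le> g t / t" if "t \<in> {0..z}" for t
      using nonneg that \<open>z \<le> s\<close> by (cases "t = 0") auto
    then have "0 \<le> integral {0..z} (\<lambda>t. g t / t)"
      using integrable_on_subinterval[OF int, of 0 z] \<open>z \<le> s\<close> by (intro integral_nonneg) auto
    then show ?thesis by simp
  qed
  also have "\<dots> = integral {0..s} (\<lambda>t. g t / t)"
    using Henstock_Kurzweil_Integration.integral_combine[OF _ \<open>z \<le> s\<close> int] \<open>0 < z\<close> by simp
  finally show ?thesis .
qed

lemma mono_mult_ln_tendsto_0:
  fixes g :: "real \<Rightarrow> real"
  assumes "b > 0" and mono: "mono_on {0<..b} g" and nonneg: "\<forall>t\<in>{0<..b}. 0 \<le> g t"
    and int: "(\<lambda>t. g t / t) integrable_on {0..b}"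
  shows "((\<lambda>z. g z * ln z) \<longlongrightarrow> 0) (at_right 0)"
proof (rule Lim_null_comparison)
  define I where "I s = integral {0..s} (\<lambda>t. g t / t)" for s
  have "((\<lambda>z. 2 * I (sqrt z)) \<longlongrightarrow> 2 * 0) (at_right 0)"
    unfolding I_def
    by (intro tendsto_mult tendsto_const filterlim_compose[OF tendsto_integral_at_right_0[OF int \<open>b > 0\<close>]
          filterlim_sqrt_at_right_0])
  then show "((\<lambda>z. 2 * I (sqrt z)) \<longlongrightarrow> 0) (at_right 0)" by simp
  have "min 1 (b\<^sup>2) > 0" using \<open>b > 0\<close> by simp
  from eventually_at_right_0_below[OF this]
  show "\<forall>\<^sub>F z in at_right 0. norm (g z * ln z) \<le> 2 * I (sqrt z)"
  proof eventually_elim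
    case (elim z)
    have "z \<le> sqrt z"
      using elim by (intro real_le_rsqrt) (simp add: power2_eq_square mult_left_le_one_le)
    moreover have "sqrt z \<le> b"
      using elim \<open>b > 0\<close> real_sqrt_less_mono[of z "b\<^sup>2"] by simp
    moreover have "ln z < 0" using elim by simp
    moreover have "0 \<le> g z" using nonneg elim calculation by simp
    moreover have "g z * (ln (sqrt z) - ln z) \<le> I (sqrt z)"
      unfolding I_def using elim calculation nonneg
      by (intro mono_mult_ln_le_integral mono_on_subset[OF mono]
          integrable_on_subinterval[OF int]) auto
    ultimately show ?case using elim by (simp add: ln_sqrt abs_mult)
  qed
qed

lemma modulus_cont_bdd_above:
  fixes f :: "real \<Rightarrow> real"
  assumes "continuous_on {a..b} f"
  shows "bdd_above {\<bar>f x - f y\<bar> | x y. x \<in> {a..b} \<and> y \<in> {a..b} \<and> \<bar>x - y\<bar> \<le> t}"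
proof -
  obtain B where B: "\<forall>x\<in>{a..b}. \<bar>f x\<bar> \<le> B"
    using compact_imp_bounded[OF compact_continuous_image[OF assms compact_Icc]]
    unfolding bounded_iff by auto
  show ?thesis
  proof (rule bdd_aboveI[of _ "2 * B"])
    fix d assume "d \<in> {\<bar>f x - f y\<bar> | x y. x \<in> {a..b} \<and> y \<in> {a..b} \<and> \<bar>x - y\<bar> \<le> t}"
    then obtain x y where "d = \<bar>f x - f y\<bar>" "x \<in> {a..b}" "y \<in> {a..b}" by blast
    moreover have "\<bar>f x\<bar> \<le> B" "\<bar>f y\<bar> \<le> B"
      using B \<open>x \<in> {a..b}\<close> \<open>y \<in> {a..b}\<close> by auto
    ultimately show "d \<le> 2 * B"
      using abs_triangle_ineq4[of "f x" "f y"] by linarith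
  qed
qed

lemma modulus_cont_bound:
  fixes f :: "real \<Rightarrow> real"
  assumes "continuous_on {a..b} f" and "x \<in> {a..b}" and "y \<in> {a..b}"
  shows "\<bar>f x - f y\<bar> \<le> modulus_cont f a b \<bar>x - y\<bar>"
  unfolding modulus_cont_def
  using assms by (intro cSup_upper modulus_cont_bdd_above) auto

lemma modulus_cont_mono:
  fixes f :: "real \<Rightarrow> real"
  assumes "continuous_on {a..b} f" and "a \<le> b" and "0 \<le> s" and "s \<le> t"
  shows "modulus_cont f a b s \<le> modulus_cont f a b t"
  unfolding modulus_cont_def
proof (rule cSup_subset_mono[OF _ modulus_cont_bdd_above[OF assms(1)]])
  show "{\<bar>f x - f y\<bar> | x y. x \<in> {a..b} \<and> y \<in> {a..b} \<and> \<bar>x - y\<bar> \<le> s} \<noteq> {}"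
    using assms(2,3) by force
  show "{\<bar>f x - f y\<bar> | x y. x \<in> {a..b} \<and> y \<in> {a..b} \<and> \<bar>x - y\<bar> \<le> s}
      \<subseteq> {\<bar>f x - f y\<bar> | x y. x \<in> {a..b} \<and> y \<in> {a..b} \<and> \<bar>x - y\<bar> \<le> t}"
    using assms(4) by force
qed

section \<open>Potentials of partial charges\<close>

definition pot_on :: "(real \<Rightarrow> real) \<Rightarrow> real \<Rightarrow> real \<Rightarrow> real \<Rightarrow> real \<Rightarrow> real" where
  "pot_on \<rho> a b r z = integral {a..b} (\<lambda>\<zeta>. \<rho> \<zeta> / sqrt ((\<zeta> - z)\<^sup>2 + r\<^sup>2))"

lemma pot_eq_pot_on: "pot \<rho> L r z = pot_on \<rho> 0 L r z"
  by (simp add: pot_def pot_on_def)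

lemma potential_integrand_integrable:
  assumes "continuous_on {a..b} \<rho>" and "r \<noteq> 0 \<or> z < a"
  shows "(\<lambda>\<zeta>. \<rho> \<zeta> / sqrt ((\<zeta> - z)\<^sup>2 + r\<^sup>2)) integrable_on {a..b}"
proof (rule integrable_continuous_real, rule continuous_on_divide)
  show "continuous_on {a..b} (\<lambda>\<zeta>. sqrt ((\<zeta> - z)\<^sup>2 + r\<^sup>2))"
    by (intro continuous_intros)
  show "\<forall>\<zeta>\<in>{a..b}. sqrt ((\<zeta> - z)\<^sup>2 + r\<^sup>2) \<noteq> 0"
    using assms(2) by auto
qed (rule assms(1))

lemma pot_on_combine:
  assumes "continuous_on {a..c} \<rho>" and "a \<le> b" "b \<le> c" and "r \<noteq> 0 \<or> z < a"
  shows "pot_on \<rho> a c r z = pot_on \<rho> a b r z + pot_on \<rho> b c r z"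
  unfolding pot_on_def
  using Henstock_Kurzweil_Integration.integral_combine[OF assms(2,3)
      potential_integrand_integrable[OF assms(1,4)]]
  by simp

lemma pot_on_nonneg:
  assumes "continuous_on {a..b} \<rho>" and "\<forall>\<zeta>\<in>{a..b}. \<rho> \<zeta> \<ge> 0" and "r \<noteq> 0 \<or> z < a"
  shows "pot_on \<rho> a b r z \<ge> 0"
  unfolding pot_on_def
  using assms by (intro integral_nonneg potential_integrand_integrable) auto

lemma pot_on_le_const:
  assumes "continuous_on {z - a..z + b} \<rho>" and "r > 0" and "- a \<le> b"
    and "\<forall>\<zeta>\<in>{z - a..z + b}. \<rho> \<zeta> \<le> c"
  shows "pot_on \<rho> (z - a) (z + b) r z \<le> c * (arsinh (a / r) + arsinh (b / r))"
proof -
  note kernel = has_integral_mult_right[OF kernel_has_integral[OF assms(2,3)], of c]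
  have "pot_on \<rho> (z - a) (z + b) r z \<le> integral {z - a..z + b} (\<lambda>\<zeta>. c * (1 / sqrt ((\<zeta> - z)\<^sup>2 + r\<^sup>2)))"
    unfolding pot_on_def using assms kernel
    by (intro integral_le potential_integrand_integrable) (auto simp: divide_right_mono)
  also have "\<dots> = c * (arsinh (a / r) + arsinh (b / r))"
    using kernel by (rule integral_unique)
  finally show ?thesis .
qed

lemma pot_on_ge_const:
  assumes "continuous_on {z - a..z + b} \<rho>" and "r > 0" and "- a \<le> b"
    and "\<forall>\<zeta>\<in>{z - a..z + b}. c \<le> \<rho> \<zeta>"
  shows "c * (arsinh (a / r) + arsinh (b / r)) \<le> pot_on \<rho> (z - a) (z + b) r z"
proof -
  note kernel = has_integral_mult_right[OF kernel_has_integral[OF assms(2,3)], of c]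
  have "c * (arsinh (a / r) + arsinh (b / r)) = integral {z - a..z + b} (\<lambda>\<zeta>. c * (1 / sqrt ((\<zeta> - z)\<^sup>2 + r\<^sup>2)))"
    using kernel by (rule integral_unique[symmetric])
  also have "\<dots> \<le> pot_on \<rho> (z - a) (z + b) r z"
    unfolding pot_on_def using assms kernel
    by (intro integral_le potential_integrand_integrable) (auto simp: divide_right_mono)
  finally show ?thesis .
qed

lemma potential_integrand_le_far:
  fixes c z \<zeta> q r :: real
  assumes "c > 1" and "z > 0" and "c * z \<le> \<zeta>" and "q \<ge> 0"
  shows "q / sqrt ((\<zeta> - z)\<^sup>2 + r\<^sup>2) \<le> c / (c - 1) * (q / \<zeta>)"
proof -
  have "\<zeta> > 0" using assms by (smt (verit) mult_pos_pos)
  have lower_pos: "\<zeta> * (c - 1) / c > 0" using \<open>\<zeta> > 0\<close> \<open>c > 1\<close> by simp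
  have "\<zeta> * (c - 1) / c \<le> \<zeta> - z"
    using assms by (simp add: field_simps)
  also have "\<dots> \<le> sqrt ((\<zeta> - z)\<^sup>2 + r\<^sup>2)"
    using real_sqrt_le_mono[of "(\<zeta> - z)\<^sup>2" "(\<zeta> - z)\<^sup>2 + r\<^sup>2"] by simp
  finally have lower: "\<zeta> * (c - 1) / c \<le> sqrt ((\<zeta> - z)\<^sup>2 + r\<^sup>2)" .
  have sqrt_pos: "sqrt ((\<zeta> - z)\<^sup>2 + r\<^sup>2) > 0" using lower lower_pos by linarith
  have "q / sqrt ((\<zeta> - z)\<^sup>2 + r\<^sup>2) \<le> q / (\<zeta> * (c - 1) / c)"
    by (rule divide_left_mono[OF lower \<open>q \<ge> 0\<close> mult_pos_pos[OF sqrt_pos lower_pos]])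
  then show ?thesis using \<open>\<zeta> > 0\<close> \<open>c > 1\<close> by (simp add: field_simps)
qed

lemma tendsto_potential_integrand_cutoff:
  fixes r :: "real \<Rightarrow> real"
  assumes "(r \<longlongrightarrow> 0) (at_right 0)" and "\<zeta> > 0"
  shows "((\<lambda>z. if \<zeta> \<in> {c * z..} then q / sqrt ((\<zeta> - z)\<^sup>2 + (r z)\<^sup>2) else 0) \<longlongrightarrow> q / \<zeta>)
           (at_right 0)"
proof -
  have "((\<lambda>z. q / sqrt ((\<zeta> - z)\<^sup>2 + (r z)\<^sup>2)) \<longlongrightarrow> q / sqrt ((\<zeta> - 0)\<^sup>2 + 0\<^sup>2)) (at_right 0)"
    using assms by (intro tendsto_intros) auto
  then have lim: "((\<lambda>z. q / sqrt ((\<zeta> - z)\<^sup>2 + (r z)\<^sup>2)) \<longlongrightarrow> q / \<zeta>) (at_right 0)"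
    using \<open>\<zeta> > 0\<close> by simp
  have "((\<lambda>z. c * z) \<longlongrightarrow> c * 0) (at_right 0)" by (intro tendsto_intros)
  then have "\<forall>\<^sub>F z in at_right 0. c * z < \<zeta>"
    using order_tendstoD(2) \<open>\<zeta> > 0\<close> by simp
  then have "\<forall>\<^sub>F z in at_right 0.
      q / sqrt ((\<zeta> - z)\<^sup>2 + (r z)\<^sup>2) = (if \<zeta> \<in> {c * z..} then q / sqrt ((\<zeta> - z)\<^sup>2 + (r z)\<^sup>2) else 0)"
    by eventually_elim simp
  with lim show ?thesis by (rule Lim_transform_eventually)
qed

lemma potential_integrand_deviation_le:
  fixes \<rho> w :: "real \<Rightarrow> real"
  assumes "r > 0" and osc: "\<bar>\<rho> \<zeta> - \<rho> z\<bar> \<le> w \<bar>\<zeta> - z\<bar>"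
  shows "\<bar>\<rho> \<zeta> / sqrt ((\<zeta> - z)\<^sup>2 + r\<^sup>2) - \<rho> z * (1 / sqrt ((\<zeta> - z)\<^sup>2 + r\<^sup>2))\<bar>
           \<le> w \<bar>\<zeta> - z\<bar> / \<bar>\<zeta> - z\<bar>"
proof -
  have "\<bar>\<zeta> - z\<bar> \<le> sqrt ((\<zeta> - z)\<^sup>2 + r\<^sup>2)"
    using real_sqrt_le_mono[of "(\<zeta> - z)\<^sup>2" "(\<zeta> - z)\<^sup>2 + r\<^sup>2"] by simp
  moreover have "sqrt ((\<zeta> - z)\<^sup>2 + r\<^sup>2) > 0"
    using \<open>r > 0\<close> by (simp add: add_nonneg_pos)
  \<comment> \<open>At \<open>\<zeta> = z\<close> both sides are \<open>0\<close>, the right one because \<open>x / 0 = 0\<close>.\<close>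
  ultimately have "\<bar>\<rho> \<zeta> - \<rho> z\<bar> / sqrt ((\<zeta> - z)\<^sup>2 + r\<^sup>2) \<le> w \<bar>\<zeta> - z\<bar> / \<bar>\<zeta> - z\<bar>"
    using osc by (cases "\<zeta> = z") (auto intro!: frac_le order_trans[OF abs_ge_zero])
  then show ?thesis by (simp add: diff_divide_distrib[symmetric])
qed

lemma has_integral_abs_centred:
  fixes f :: "real \<Rightarrow> real"
  assumes "(f has_integral I) {0..h}" and "h \<ge> 0"
  shows "((\<lambda>\<zeta>. f \<bar>\<zeta> - z\<bar>) has_integral 2 * I) {z - h..z + h}"
proof -
  have right: "((\<lambda>\<zeta>. f \<bar>\<zeta> - z\<bar>) has_integral I) {z..z + h}"
  proof -
    have "((f \<circ> (+) (- z)) has_integral I) {z..z + h}"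
      using has_integral_shift_Icc_real[of f "- z" I z "z + h"] assms(1) by simp
    then show ?thesis by (rule has_integral_cong[THEN iffD1, rotated]) auto
  qed
  have left: "((\<lambda>\<zeta>. f \<bar>\<zeta> - z\<bar>) has_integral I) {z - h..z}"
  proof -
    have "((\<lambda>\<zeta>. f (- \<zeta>)) has_integral I) {- h..- 0}"
      using assms(1) by (simp only: has_integral_reflect_real)
    then have "(((\<lambda>\<zeta>. f (- \<zeta>)) \<circ> (+) (- z)) has_integral I) {z - h..z}"
      using has_integral_shift_Icc_real[of "\<lambda>\<zeta>. f (- \<zeta>)" "- z" I "z - h" z] by simp
    then show ?thesis by (rule has_integral_cong[THEN iffD1, rotated]) auto
  qed
  show ?thesis
    using has_integral_combine[OF _ _ left right] assms(2) by simp
qed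

lemma pot_on_centred_deviation_le:
  fixes \<rho> w :: "real \<Rightarrow> real"
  assumes cont: "continuous_on {z - h..z + h} \<rho>" and "r > 0" and "h \<ge> 0"
    and osc: "\<forall>\<zeta>\<in>{z - h..z + h}. \<bar>\<rho> \<zeta> - \<rho> z\<bar> \<le> w \<bar>\<zeta> - z\<bar>"
    and w_int: "(\<lambda>t. w t / t) integrable_on {0..h}"
  shows "\<bar>pot_on \<rho> (z - h) (z + h) r z - \<rho> z * (2 * arsinh (h / r))\<bar>
           \<le> 2 * integral {0..h} (\<lambda>t. w t / t)"
proof -
  let ?k = "\<lambda>\<zeta>. 1 / sqrt ((\<zeta> - z)\<^sup>2 + r\<^sup>2)"
  have kernel: "(?k has_integral 2 * arsinh (h / r)) {z - h..z + h}"
    using kernel_has_integral[of r h h z] \<open>r > 0\<close> \<open>h \<ge> 0\<close> by simp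
  have dev: "((\<lambda>\<zeta>. w \<bar>\<zeta> - z\<bar> / \<bar>\<zeta> - z\<bar>) has_integral 2 * integral {0..h} (\<lambda>t. w t / t))
      {z - h..z + h}"
    using has_integral_abs_centred[OF integrable_integral[OF w_int] \<open>h \<ge> 0\<close>] by simp
  have pot_int: "(\<lambda>\<zeta>. \<rho> \<zeta> / sqrt ((\<zeta> - z)\<^sup>2 + r\<^sup>2)) integrable_on {z - h..z + h}"
    using potential_integrand_integrable[OF cont] \<open>r > 0\<close> by simp
  note const = has_integral_mult_right[OF kernel, of "\<rho> z"]
  have bound: "norm (\<rho> \<zeta> / sqrt ((\<zeta> - z)\<^sup>2 + r\<^sup>2) - \<rho> z * ?k \<zeta>) \<le> w \<bar>\<zeta> - z\<bar> / \<bar>\<zeta> - z\<bar>"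
    if "\<zeta> \<in> {z - h..z + h}" for \<zeta>
    using potential_integrand_deviation_le[OF \<open>r > 0\<close>] osc that by simp
  have "pot_on \<rho> (z - h) (z + h) r z - \<rho> z * (2 * arsinh (h / r))
      = integral {z - h..z + h} (\<lambda>\<zeta>. \<rho> \<zeta> / sqrt ((\<zeta> - z)\<^sup>2 + r\<^sup>2) - \<rho> z * ?k \<zeta>)"
    unfolding pot_on_def integral_diff[OF pot_int has_integral_integrable[OF const]]
      integral_unique[OF const] ..
  also have "\<bar>\<dots>\<bar> \<le> integral {z - h..z + h} (\<lambda>\<zeta>. w \<bar>\<zeta> - z\<bar> / \<bar>\<zeta> - z\<bar>)"
    using Henstock_Kurzweil_Integration.integral_norm_bound_integral[OF
        integrable_diff[OF pot_int has_integral_integrable[OF const]] has_integral_integrable[OF dev] bound]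
    by simp
  also have "\<dots> = 2 * integral {0..h} (\<lambda>t. w t / t)"
    using dev by (rule integral_unique)
  finally show ?thesis .
qed

section \<open>Line charges\<close>

locale line_charge =
  fixes \<rho> :: "real \<Rightarrow> real" and L :: real
  assumes L_pos: "L > 0"
    and cont: "continuous_on {0..L} \<rho>"
    and rho_0: "\<rho> 0 = 0"
    and pos: "\<forall>x\<in>{0<..L}. \<rho> x > 0"
    and integrable_rho_div: "(\<lambda>\<zeta>. \<rho> \<zeta> / \<zeta>) integrable_on {0..L}"
begin

lemma rho_nonneg: "x \<in> {0..L} \<Longrightarrow> 0 \<le> \<rho> x"
  using pos rho_0 by (cases "x = 0") (auto intro: less_imp_le)

lemma pot_origin: "pot \<rho> L 0 0 = integral {0..L} (\<lambda>\<zeta>. \<rho> \<zeta> / \<zeta>)"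
  unfolding pot_def by (rule integral_cong) simp

lemma tendsto_rho_0: "(\<rho> \<longlongrightarrow> 0) (at_right 0)"
  using continuous_on_Icc_at_rightD[OF cont L_pos] rho_0 by simp

lemma eventually_rho_scaled_pos:
  assumes "\<kappa> > 0"
  shows "\<forall>\<^sub>F z in at_right 0. \<rho> (\<kappa> * z) > 0"
proof -
  have "L / \<kappa> > 0" using assms L_pos by simp
  from eventually_at_right_0_below[OF this] show ?thesis
    by eventually_elim (use pos assms in \<open>auto simp: field_simps\<close>)
qed

lemma pot_split:
  assumes "r > 0" and "0 \<le> m" and "m \<le> L"
  shows "pot \<rho> L r z = pot_on \<rho> 0 m r z + pot_on \<rho> m L r z"
  unfolding pot_eq_pot_on using assms by (intro pot_on_combine cont) auto

lemma tendsto_pot_on_far: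
  assumes "c > 1" and r: "(r \<longlongrightarrow> 0) (at_right 0)"
  shows "((\<lambda>z. pot_on \<rho> (c * z) L (r z) z) \<longlongrightarrow> pot \<rho> L 0 0) (at_right 0)"
proof -
  define h where
    "h z \<zeta> = (if \<zeta> \<in> {c * z..} then \<rho> \<zeta> / sqrt ((\<zeta> - z)\<^sup>2 + (r z)\<^sup>2) else 0)" for z \<zeta>
  have restrict: "{c * z..} \<inter> {0..L} = {c * z..L}" if "z > 0" for z
    using that \<open>c > 1\<close> by auto
  have "(\<lambda>\<zeta>. \<rho> \<zeta> / sqrt ((\<zeta> - z)\<^sup>2 + (r z)\<^sup>2)) integrable_on {c * z..L}" if "z > 0" for z
    using that \<open>c > 1\<close>
    by (intro potential_integrand_integrable continuous_on_subset[OF cont]) auto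
  then have h_int: "h z integrable_on {0..L}"
    and h_eq: "integral {0..L} (h z) = pot_on \<rho> (c * z) L (r z) z" if "z > 0" for z
    using that
    unfolding h_def pot_on_def integrable_restrict_Int integral_restrict_Int restrict[OF that]
    by auto
  have "(\<lambda>\<zeta>. c / (c - 1) * (\<rho> \<zeta> / \<zeta>)) integrable_on {0..L}"
    by (rule integrable_on_mult_right[OF integrable_rho_div])
  moreover have "norm (h z \<zeta>) \<le> c / (c - 1) * (\<rho> \<zeta> / \<zeta>)" if "z > 0" and "\<zeta> \<in> {0..L}" for z \<zeta>
    using potential_integrand_le_far[OF \<open>c > 1\<close> \<open>z > 0\<close> _ rho_nonneg[OF that(2)]]
      rho_nonneg[OF that(2)] that(2) \<open>c > 1\<close>
    by (auto simp: h_def)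
  moreover have "(\<lambda>n. h (S n) \<zeta>) \<longlonglongrightarrow> \<rho> \<zeta> / \<zeta>"
    if S_pos: "\<And>n. S n > 0" and S: "S \<longlonglongrightarrow> 0" and "\<zeta> \<in> {0..L}" for S \<zeta>
  proof (cases "\<zeta> = 0")
    case True
    have "h (S n) \<zeta> = 0" for n by (simp add: h_def True rho_0)
    then show ?thesis using True by simp
  next
    case False
    then have "\<zeta> > 0" using that by simp
    have "filterlim S (at_right 0) sequentially"
      using S S_pos by (intro tendsto_imp_filterlim_at_right) auto
    then show ?thesis unfolding h_def
      by (rule filterlim_compose[OF tendsto_potential_integrand_cutoff[OF r \<open>\<zeta> > 0\<close>]])
  qed
  ultimately have "((\<lambda>z. integral {0..L} (h z)) \<longlongrightarrow> integral {0..L} (\<lambda>\<zeta>. \<rho> \<zeta> / \<zeta>)) (at_right 0)"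
    by (intro tendsto_at_right_sequentially[of 0 1] dominated_convergence(2)[OF h_int]) auto
  then show ?thesis
    unfolding pot_origin
    by (rule Lim_transform_eventually)
       (use eventually_at_right_less[of 0] in \<open>eventually_elim, simp add: h_eq\<close>)
qed

lemma tendsto_scaled_arsinh:
  assumes rho_ln: "((\<lambda>z. \<rho> z * ln z) \<longlongrightarrow> 0) (at_right 0)"
    and "\<alpha> > 0" and "\<kappa> > 0" and "\<mu> > 0"
  shows "((\<lambda>z. \<rho> (\<kappa> * z) * arsinh (\<mu> * z / exp (- \<alpha> / \<rho> (\<kappa> * z)))) \<longlongrightarrow> \<alpha>) (at_right 0)"
  using assms
  by (intro tendsto_mult_arsinh_exp tendsto_scaled_mult_ln[OF tendsto_rho_0 rho_ln]
      filterlim_compose[OF tendsto_rho_0 filterlim_scale_at_right_0] eventually_rho_scaled_pos) auto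

lemma tendsto_scaled_radius_0:
  assumes "\<alpha> > 0" and "\<kappa> > 0"
  shows "((\<lambda>z. exp (- \<alpha> / \<rho> (\<kappa> * z))) \<longlongrightarrow> 0) (at_right 0)"
  using assms
  by (intro tendsto_exp_neg_div_0 filterlim_compose[OF tendsto_rho_0 filterlim_scale_at_right_0]
      eventually_rho_scaled_pos)

lemma Limsup_pot_le_mono:
  assumes mono: "mono_on {0..b} \<rho>" and "b > 0" and "\<alpha> > 0" and "\<delta> > 0"
    and rho_ln: "((\<lambda>z. \<rho> z * ln z) \<longlongrightarrow> 0) (at_right 0)"
  shows "Limsup (at_right 0) (\<lambda>z. ereal (pot \<rho> L (exp (- \<alpha> / \<rho> ((1 + \<delta>) * z))) z))
           \<le> ereal (pot \<rho> L 0 0 + 2 * \<alpha>)"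
proof -
  define r where "r z = exp (- \<alpha> / \<rho> ((1 + \<delta>) * z))" for z
  define u where "u z = \<rho> ((1 + \<delta>) * z) * arsinh (z / r z)
    + \<rho> ((1 + \<delta>) * z) * arsinh (\<delta> * z / r z) + pot_on \<rho> ((1 + \<delta>) * z) L (r z) z" for z
  have "min b L / (1 + \<delta>) > 0" using \<open>b > 0\<close> L_pos \<open>\<delta> > 0\<close> by simp
  from eventually_at_right_0_below[OF this]
  have "\<forall>\<^sub>F z in at_right 0. pot \<rho> L (r z) z \<le> u z"
  proof eventually_elim
    case (elim z)
    define w where "w = (1 + \<delta>) * z"
    have "0 < z" "0 < \<delta> * z" "w \<le> b" "w \<le> L"
      using elim \<open>\<delta> > 0\<close> by (auto simp: w_def field_simps)
    have "pot_on \<rho> (z - z) (z + \<delta> * z) (r z) z \<le> \<rho> w * (arsinh (z / r z) + arsinh (\<delta> * z / r z))"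
      using \<open>0 < z\<close> \<open>0 < \<delta> * z\<close> \<open>w \<le> b\<close> \<open>w \<le> L\<close>
      by (intro pot_on_le_const continuous_on_subset[OF cont] ballI mono_onD[OF mono])
         (auto simp: r_def w_def algebra_simps)
    then have "pot_on \<rho> 0 w (r z) z \<le> \<rho> w * arsinh (z / r z) + \<rho> w * arsinh (\<delta> * z / r z)"
      by (simp add: w_def algebra_simps)
    moreover have "pot \<rho> L (r z) z = pot_on \<rho> 0 w (r z) z + pot_on \<rho> w L (r z) z"
      using \<open>0 < z\<close> \<open>w \<le> L\<close> \<open>\<delta> > 0\<close> by (intro pot_split) (auto simp: r_def w_def)
    ultimately show ?case by (simp add: u_def w_def)
  qed
  moreover have "(u \<longlongrightarrow> \<alpha> + \<alpha> + pot \<rho> L 0 0) (at_right 0)"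
  proof -
    have "((\<lambda>z. \<rho> ((1 + \<delta>) * z) * arsinh (z / r z)) \<longlongrightarrow> \<alpha>) (at_right 0)"
      using tendsto_scaled_arsinh[OF rho_ln \<open>\<alpha> > 0\<close>, of "1 + \<delta>" 1] \<open>\<delta> > 0\<close> by (simp add: r_def)
    then show ?thesis
      unfolding u_def r_def using \<open>\<delta> > 0\<close> \<open>\<alpha> > 0\<close>
      by (intro tendsto_add tendsto_scaled_arsinh[OF rho_ln] tendsto_pot_on_far
          tendsto_scaled_radius_0) auto
  qed
  ultimately show ?thesis
    unfolding r_def by (intro Limsup_ereal_le_tendsto) (auto simp: algebra_simps)
qed

lemma Liminf_pot_ge_mono:
  assumes mono: "mono_on {0..b} \<rho>" and "b > 0" and "\<alpha> > 0" and "0 < \<delta>" "\<delta> < 1"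
    and rho_ln: "((\<lambda>z. \<rho> z * ln z) \<longlongrightarrow> 0) (at_right 0)"
  shows "ereal (pot \<rho> L 0 0 + 2 * \<alpha>)
           \<le> Liminf (at_right 0) (\<lambda>z. ereal (pot \<rho> L (exp (- \<alpha> / \<rho> ((1 - \<delta>) * z))) z))"
proof -
  define r where "r z = exp (- \<alpha> / \<rho> ((1 - \<delta>) * z))" for z
  define l where "l z = 2 * (\<rho> ((1 - \<delta>) * z) * arsinh (\<delta> * z / r z))
    + pot_on \<rho> ((1 + \<delta>) * z) L (r z) z" for z
  have "min b L / (1 + \<delta>) > 0" using \<open>b > 0\<close> L_pos \<open>\<delta> > 0\<close> by simp
  from eventually_at_right_0_below[OF this]
  have "\<forall>\<^sub>F z in at_right 0. l z \<le> pot \<rho> L (r z) z"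
  proof eventually_elim
    case (elim z)
    define w v where "w = (1 - \<delta>) * z" and "v = (1 + \<delta>) * z"
    have "0 < z" "0 < \<delta> * z" "0 \<le> w" "w \<le> v" "v \<le> b" "v \<le> L" "r z > 0"
      using elim \<open>0 < \<delta>\<close> \<open>\<delta> < 1\<close> by (auto simp: w_def v_def r_def field_simps)
    have "\<rho> w * (arsinh (\<delta> * z / r z) + arsinh (\<delta> * z / r z)) \<le> pot_on \<rho> (z - \<delta> * z) (z + \<delta> * z) (r z) z"
      using \<open>0 < \<delta> * z\<close> \<open>0 \<le> w\<close> \<open>v \<le> b\<close> \<open>v \<le> L\<close> \<open>r z > 0\<close>
      by (intro pot_on_ge_const continuous_on_subset[OF cont] ballI mono_onD[OF mono])
         (auto simp: w_def v_def algebra_simps)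
    then have "2 * (\<rho> w * arsinh (\<delta> * z / r z)) \<le> pot_on \<rho> w v (r z) z"
      by (simp add: w_def v_def algebra_simps)
    moreover have "0 \<le> pot_on \<rho> 0 w (r z) z"
      using \<open>w \<le> v\<close> \<open>v \<le> L\<close> \<open>r z > 0\<close> rho_nonneg
      by (intro pot_on_nonneg continuous_on_subset[OF cont]) auto
    moreover have "pot \<rho> L (r z) z = pot_on \<rho> 0 w (r z) z + pot_on \<rho> w v (r z) z + pot_on \<rho> v L (r z) z"
      using \<open>0 \<le> w\<close> \<open>w \<le> v\<close> \<open>v \<le> L\<close> \<open>r z > 0\<close>
      by (simp add: pot_split[of "r z" v] pot_on_combine[of 0 v \<rho> w] continuous_on_subset[OF cont])
    ultimately show ?case by (simp add: l_def w_def v_def)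
  qed
  moreover have "(l \<longlongrightarrow> 2 * \<alpha> + pot \<rho> L 0 0) (at_right 0)"
    unfolding l_def r_def using \<open>0 < \<delta>\<close> \<open>\<delta> < 1\<close> \<open>\<alpha> > 0\<close>
    by (intro tendsto_add tendsto_mult_left tendsto_scaled_arsinh[OF rho_ln] tendsto_pot_on_far
        tendsto_scaled_radius_0) auto
  ultimately show ?thesis
    unfolding r_def by (intro Liminf_ereal_ge_tendsto) (auto simp: algebra_simps)
qed

lemma mult_ln_tendsto_0_mono:
  assumes mono: "mono_on {0..b} \<rho>" and "b > 0"
  shows "((\<lambda>z. \<rho> z * ln z) \<longlongrightarrow> 0) (at_right 0)"
proof (rule mono_mult_ln_tendsto_0)
  show "min b L > 0" using \<open>b > 0\<close> L_pos by simp
  show "mono_on {0<..min b L} \<rho>" by (rule mono_on_subset[OF mono]) auto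
  show "\<forall>t\<in>{0<..min b L}. 0 \<le> \<rho> t" using rho_nonneg by simp
  show "(\<lambda>t. \<rho> t / t) integrable_on {0..min b L}"
    by (rule integrable_on_subinterval[OF integrable_rho_div]) auto
qed

lemma mult_ln_tendsto_0_dini:
  assumes dini: "dini_continuous_on \<rho> 0 b" and "b > 0"
  shows "((\<lambda>z. \<rho> z * ln z) \<longlongrightarrow> 0) (at_right 0)"
proof (rule Lim_null_comparison)
  define \<omega> where "\<omega> = modulus_cont \<rho> 0 b"
  define c where "c = min (min b 1) L"
  have "c > 0" using \<open>b > 0\<close> L_pos by (simp add: c_def)
  have cont_b: "continuous_on {0..b} \<rho>" and int: "(\<lambda>t. \<omega> t / t) integrable_on {0..1}"
    using dini unfolding dini_continuous_on_def \<omega>_def by auto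
  have rho_le: "0 \<le> \<rho> t \<and> \<rho> t \<le> \<omega> t" if "t \<in> {0<..c}" for t
    using that modulus_cont_bound[OF cont_b, of t 0] rho_nonneg[of t] rho_0
    by (simp add: c_def \<omega>_def)
  show "((\<lambda>z. \<bar>\<omega> z * ln z\<bar>) \<longlongrightarrow> 0) (at_right 0)"
  proof (intro tendsto_rabs_zero mono_mult_ln_tendsto_0[OF \<open>c > 0\<close>])
    show "mono_on {0<..c} \<omega>"
      using \<open>b > 0\<close> by (intro mono_onI) (auto simp: \<omega>_def c_def intro!: modulus_cont_mono[OF cont_b])
    show "\<forall>t\<in>{0<..c}. 0 \<le> \<omega> t" using rho_le by force
    show "(\<lambda>t. \<omega> t / t) integrable_on {0..c}"
      by (rule integrable_on_subinterval[OF int]) (auto simp: c_def)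
  qed
  show "\<forall>\<^sub>F z in at_right 0. norm (\<rho> z * ln z) \<le> \<bar>\<omega> z * ln z\<bar>"
    using eventually_at_right_0_below[OF \<open>c > 0\<close>]
  proof eventually_elim
    case (elim z)
    then have "0 \<le> \<rho> z" "\<rho> z \<le> \<omega> z" using rho_le by auto
    then show ?case by (simp add: abs_mult mult_right_mono)
  qed
qed

lemma pot_deviation_le_dini:
  assumes dini: "dini_continuous_on \<rho> 0 b"
    and "0 < z" "2 * z \<le> b" "2 * z \<le> L" "z \<le> 1" "r > 0"
  shows "\<bar>pot \<rho> L r z - (2 * (\<rho> z * arsinh (z / r)) + pot_on \<rho> (2 * z) L r z)\<bar>
           \<le> 2 * integral {0..z} (\<lambda>t. modulus_cont \<rho> 0 b t / t)"
proof -
  have cont_b: "continuous_on {0..b} \<rho>"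
    and int: "(\<lambda>t. modulus_cont \<rho> 0 b t / t) integrable_on {0..1}"
    using dini unfolding dini_continuous_on_def by auto
  have "\<bar>pot_on \<rho> (z - z) (z + z) r z - \<rho> z * (2 * arsinh (z / r))\<bar>
      \<le> 2 * integral {0..z} (\<lambda>t. modulus_cont \<rho> 0 b t / t)"
  proof (rule pot_on_centred_deviation_le)
    show "continuous_on {z - z..z + z} \<rho>"
      using \<open>2 * z \<le> L\<close> by (intro continuous_on_subset[OF cont]) auto
    show "\<forall>\<zeta>\<in>{z - z..z + z}. \<bar>\<rho> \<zeta> - \<rho> z\<bar> \<le> modulus_cont \<rho> 0 b \<bar>\<zeta> - z\<bar>"
      using \<open>0 < z\<close> \<open>2 * z \<le> b\<close> by (auto intro!: modulus_cont_bound[OF cont_b])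
    show "(\<lambda>t. modulus_cont \<rho> 0 b t / t) integrable_on {0..z}"
      using \<open>z \<le> 1\<close> by (intro integrable_on_subinterval[OF int]) auto
  qed (use \<open>0 < z\<close> \<open>r > 0\<close> in auto)
  moreover have "pot \<rho> L r z = pot_on \<rho> 0 (2 * z) r z + pot_on \<rho> (2 * z) L r z"
    using \<open>0 < z\<close> \<open>2 * z \<le> L\<close> \<open>r > 0\<close> by (intro pot_split) auto
  ultimately show ?thesis by (simp add: algebra_simps)
qed

lemma tendsto_pot_dini:
  assumes dini: "dini_continuous_on \<rho> 0 b" and "b > 0" and "\<alpha> > 0"
    and rho_ln: "((\<lambda>z. \<rho> z * ln z) \<longlongrightarrow> 0) (at_right 0)"
  shows "((\<lambda>z. pot \<rho> L (exp (- \<alpha> / \<rho> z)) z) \<longlongrightarrow> pot \<rho> L 0 0 + 2 * \<alpha>) (at_right 0)"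
proof -
  define r where "r z = exp (- \<alpha> / \<rho> z)" for z
  define u where "u z = 2 * (\<rho> z * arsinh (z / r z)) + pot_on \<rho> (2 * z) L (r z) z" for z
  define I where "I z = 2 * integral {0..z} (\<lambda>t. modulus_cont \<rho> 0 b t / t)" for z
  have "min (min b L) 2 / 2 > 0" using \<open>b > 0\<close> L_pos by simp
  from eventually_at_right_0_below[OF this]
  have "\<forall>\<^sub>F z in at_right 0. norm (pot \<rho> L (r z) z - u z) \<le> I z"
    by eventually_elim (use pot_deviation_le_dini[OF dini] in \<open>simp add: u_def I_def r_def\<close>)
  moreover have "(I \<longlongrightarrow> 0) (at_right 0)"
    using dini tendsto_mult_left[OF tendsto_integral_at_right_0[OF _ zero_less_one], of _ 2]
    unfolding dini_continuous_on_def I_def[abs_def] by simp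
  ultimately have "((\<lambda>z. pot \<rho> L (r z) z - u z) \<longlongrightarrow> 0) (at_right 0)"
    by (rule Lim_null_comparison)
  moreover have "(u \<longlongrightarrow> 2 * \<alpha> + pot \<rho> L 0 0) (at_right 0)"
  proof -
    have "((\<lambda>z. \<rho> z * arsinh (z / r z)) \<longlongrightarrow> \<alpha>) (at_right 0)"
      using tendsto_scaled_arsinh[OF rho_ln \<open>\<alpha> > 0\<close>, of 1 1] by (simp add: r_def)
    moreover have "(r \<longlongrightarrow> 0) (at_right 0)"
      using tendsto_scaled_radius_0[OF \<open>\<alpha> > 0\<close>, of 1] by (simp add: r_def[abs_def])
    ultimately show ?thesis
      unfolding u_def by (intro tendsto_add tendsto_mult_left tendsto_pot_on_far) auto
  qed
  ultimately have "((\<lambda>z. (pot \<rho> L (r z) z - u z) + u z) \<longlongrightarrow> 0 + (2 * \<alpha> + pot \<rho> L 0 0)) (at_right 0)"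
    by (rule tendsto_add)
  then show ?thesis by (simp add: r_def add.commute)
qed

end

theorem proposition4p5:
  fixes \<rho> :: "real \<Rightarrow> real" and L \<alpha> :: real
  assumes L_pos: "L > 0"
    and cont: "continuous_on {0..L} \<rho>"
    and nonneg: "\<forall>x\<in>{0..L}. \<rho> x \<ge> 0"
    and rho0: "\<rho> 0 = 0"
    and pos: "\<forall>x\<in>{0<..L}. \<rho> x > 0"
    and V00_fin: "(\<lambda>\<zeta>. \<rho> \<zeta> / \<zeta>) integrable_on {0..L}"
    and alpha_pos: "\<alpha> > 0"
  shows
    "(\<forall>b \<delta>. 0 < b \<and> b \<le> L \<and> mono_on {0..b} \<rho> \<and> 0 < \<delta> \<and> \<delta> < 1 \<longrightarrow>
        ((\<lambda>z. \<rho> z * ln z) \<longlongrightarrow> 0) (at_right 0) \<and>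
        Limsup (at_right 0) (\<lambda>z. ereal (pot \<rho> L (exp (- \<alpha> / \<rho> ((1 + \<delta>) * z))) z))
          \<le> ereal (pot \<rho> L 0 0 + 2 * \<alpha>) \<and>
        ereal (pot \<rho> L 0 0 + 2 * \<alpha>)
          \<le> Liminf (at_right 0) (\<lambda>z. ereal (pot \<rho> L (exp (- \<alpha> / \<rho> ((1 - \<delta>) * z))) z)))
     \<and>
     (\<forall>b. 0 < b \<and> b \<le> L \<and> dini_continuous_on \<rho> 0 b \<longrightarrow>
        ((\<lambda>z. \<rho> z * ln z) \<longlongrightarrow> 0) (at_right 0) \<and>
        ((\<lambda>z. pot \<rho> L (exp (- \<alpha> / \<rho> z)) z) \<longlongrightarrow> pot \<rho> L 0 0 + 2 * \<alpha>) (at_right 0))"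
proof -
  interpret line_charge \<rho> L
    using L_pos cont rho0 pos V00_fin by unfold_locales
  show ?thesis
    using alpha_pos mult_ln_tendsto_0_mono mult_ln_tendsto_0_dini
      Limsup_pot_le_mono Liminf_pot_ge_mono tendsto_pot_dini
    by blast
qed

end
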